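(* For $k\ge4$ let $\iota_k=\lfloor k^{1/3}\rfloor$ and $$A(k)=\sum_{j=4}^{k-\iota_k-1}j\,s_j\,\tilde\tau_k^{\,j-1}.$$ Then $A(k)=\mathcal{O}(k^{-3})$ as $k\to\infty$.
   Context: Let $s_j$ be the number of simple permutations of size $j$. A permutation is simple if its only intervals (factors whose value set is a set of consecutive integers) are the singletons and the whole permutation, with the convention that the permutations of sizes $1$ and $2$ are not simple. For $k\ge4$, let $$\Lambda_k(x)=\frac{x^2}{1-x}+\sum_{j=4}^k s_j\left(\frac{x}{1-x}\right)^j\qquad(0\le x<1).$$ Let $\tau_k$ be the unique solution in $(0,1)$ of $\Lambda_k'(x)=1$, and set $$\tilde\tau_k=\frac{\tau_k}{1-\tau_k}.$$ *)

theory Defs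
  imports "HOL-Analysis.Analysis" "HOL-Library.Landau_Symbols"
begin

definition is_perm :: "nat \<Rightarrow> nat list \<Rightarrow> bool" where
  "is_perm n p \<longleftrightarrow> distinct p \<and> set p = {0..<n}"

definition consecutive_set :: "nat set \<Rightarrow> bool" where
  "consecutive_set S \<longleftrightarrow> (\<exists>a b. S = {a..b})"

definition factor :: "nat list \<Rightarrow> nat \<Rightarrow> nat \<Rightarrow> nat list" where
  "factor p i j = take (j - i + 1) (drop i p)"

definition is_interval :: "nat list \<Rightarrow> nat \<Rightarrow> nat \<Rightarrow> bool" where
  "is_interval p i j \<longleftrightarrow> i \<le> j \<and> j < length p \<and> consecutive_set (set (factor p i j))"

text \<open>Simple: only trivial intervals; sizes 1 and 2 (and 0) excluded by convention.\<close>
definition simple_perm :: "nat list \<Rightarrow> bool" where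
  "simple_perm p \<longleftrightarrow> length p \<ge> 3 \<and>
     (\<forall>i j. is_interval p i j \<longrightarrow> i = j \<or> (i = 0 \<and> j = length p - 1))"

definition num_simple :: "nat \<Rightarrow> nat" where
  "num_simple j = card {p. is_perm j p \<and> simple_perm p}"

definition Lambda :: "nat \<Rightarrow> real \<Rightarrow> real" where
  "Lambda k x = x^2 / (1 - x) + (\<Sum>j=4..k. real (num_simple j) * (x / (1 - x))^j)"

definition tau :: "nat \<Rightarrow> real" where
  "tau k = (THE x. 0 < x \<and> x < 1 \<and> deriv (Lambda k) x = 1)"

definition tau_tilde :: "nat \<Rightarrow> real" where
  "tau_tilde k = tau k / (1 - tau k)"

definition iota :: "nat \<Rightarrow> nat" where
  "iota k = nat \<lfloor>root 3 (real k)\<rfloor>"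

definition A :: "nat \<Rightarrow> real" where
  "A k = (\<Sum>j=4..k - iota k - 1. real j * real (num_simple j) * tau_tilde k ^ (j - 1))"

end

(* Write y = tau_tilde k and t_j = j s_j y^(j-1). The critical point is the positive root of
   (1 + y)^2 (1 + P_k y) = 2 with P_k y = t_4 + ... + t_k, so every t_j with j <= k is at most 1.
   Inserting a new maximum into a simple permutation, away from the old maximum, gives
   s_(j+1) >= (j - 3) s_j, hence s_k >= (k - 4)!, while trivially s_j <= j!.
   With the Stirling-type bounds n^n <= e^(n-1) n! <= n^(n+1), the condition t_k <= 1 forces y <= 3/k;
   then t_j <= 2 j^6 (19/20)^(j-4) / k^3 for j < 4k/5 + 3, a summable bound of order k^-3, and the
   same estimate shows that y < 3/(2k) would make (1 + y)^2 (1 + P_k y) < 2, so y >= 3/(2k).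
   For larger j this gives (j - 3) y >= 6/5, hence t_j <= (5/6) t_(j+1) <= (5/6)^(k-j), and the terms
   with j <= k - iota_k - 1 contribute at most k (5/6)^(k^(1/3)) = o(k^-3). *)

theory Submission
  imports Defs "HOL-Combinatorics.Multiset_Permutations" "HOL-Real_Asymp.Real_Asymp"
begin

lemma set_factor:
  assumes "a \<le> b" "b < length p"
  shows "set (factor p a b) = (!) p ` {a..b}"
proof -
  have "factor p a b = map ((!) p) [a..<Suc b]"
    using assms by (intro nth_equalityI) (auto simp: factor_def nth_map_upt simp del: upt_Suc)
  then show ?thesis by (simp add: atLeastLessThanSuc_atLeastAtMost del: upt_Suc)
qed

lemma is_interval_iff_image:
  "is_interval p a b \<longleftrightarrow> a \<le> b \<and> b < length p \<and> consecutive_set ((!) p ` {a..b})"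
  unfolding is_interval_def using set_factor by auto

lemma consecutive_setD:
  assumes "consecutive_set S" "x \<in> S" "z \<in> S" "x \<le> y" "y \<le> z"
  shows "y \<in> S"
  using assms unfolding consecutive_set_def by auto

lemma consecutive_set_remove_max:
  fixes m :: nat
  assumes cons: "consecutive_set (insert m X)" and less: "\<forall>x\<in>X. x < m"
  shows "consecutive_set X"
proof (cases "X = {}")
  case True
  then show ?thesis unfolding consecutive_set_def by (intro exI[of _ 1] exI[of _ 0]) simp
next
  case False
  obtain c d where cd: "insert m X = {c..d}" using cons unfolding consecutive_set_def by blast
  have "m \<in> {c..d}" using cd by blast
  then have "d \<in> insert m X" using cd by auto
  then have "d = m" using less \<open>m \<in> {c..d}\<close> by fastforce
  then have "X = {c..d} - {m}" using cd less by auto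
  also have "\<dots> = {c..m - 1}" using \<open>d = m\<close> False less by fastforce
  finally have "X = {c..m - 1}" .
  then show ?thesis unfolding consecutive_set_def by blast
qed

lemma simple_perm_1302: "simple_perm [1, 3, 0, 2]"
  unfolding simple_perm_def
proof (intro conjI allI impI)
  fix i j assume ij: "is_interval [1, 3, 0, 2] i j"
  then have "i \<in> {0, 1, 2, 3}" "j \<in> {0, 1, 2, 3}" by (auto simp: is_interval_def)
  then show "i = j \<or> i = 0 \<and> j = length [1::nat, 3, 0, 2] - 1"
    using ij by (auto simp: is_interval_def factor_def
        dest: consecutive_setD[of _ 0 3 1] consecutive_setD[of _ 1 3 2] consecutive_setD[of _ 0 2 1])
qed auto

lemma length_perm: "is_perm n p \<Longrightarrow> length p = n"
  unfolding is_perm_def by (metis distinct_card card_atLeastLessThan diff_zero)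

lemma nth_perm_less: "is_perm n p \<Longrightarrow> t < n \<Longrightarrow> p ! t < n"
  using length_perm unfolding is_perm_def by (metis atLeastLessThan_iff nth_mem)

lemma is_perm_iff_permutations_of_set: "is_perm n p \<longleftrightarrow> p \<in> permutations_of_set {0..<n}"
  unfolding is_perm_def permutations_of_set_def by auto

lemma finite_simple_perms: "finite {p. is_perm n p \<and> simple_perm p}"
  by (rule finite_subset[of _ "permutations_of_set {0..<n}"])
    (auto simp: is_perm_iff_permutations_of_set)

lemma num_simple_le_fact: "real (num_simple n) \<le> fact n"
proof -
  have "num_simple n \<le> card (permutations_of_set {0..<n})"
    unfolding num_simple_def by (rule card_mono) (auto simp: is_perm_iff_permutations_of_set)
  then have "num_simple n \<le> fact n" by simp
  then have "real (num_simple n) \<le> real (fact n)" by (rule of_nat_mono)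
  then show ?thesis by simp
qed

lemma num_simple_4_pos: "1 \<le> num_simple 4"
proof -
  have "[1, 3, 0, 2] \<in> {p. is_perm 4 p \<and> simple_perm p}"
    using simple_perm_1302 by (auto simp: is_perm_def)
  then have "{p. is_perm 4 p \<and> simple_perm p} \<noteq> {}" by blast
  then show ?thesis
    unfolding num_simple_def using finite_simple_perms[of 4] by (simp add: Suc_le_eq card_gt_0_iff)
qed

definition insert_nth :: "nat \<Rightarrow> 'a \<Rightarrow> 'a list \<Rightarrow> 'a list" where
  "insert_nth i x xs = take i xs @ x # drop i xs"

lemma length_insert_nth [simp]: "length (insert_nth i x xs) = Suc (length xs)"
  by (simp add: insert_nth_def)

lemma set_insert_nth: "set (insert_nth i x xs) = insert x (set xs)"
  unfolding insert_nth_def by (metis Un_insert_right append_take_drop_id list.simps(15) set_append)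

lemma nth_insert_nth:
  assumes "i \<le> length xs" "t \<le> length xs"
  shows "insert_nth i x xs ! t = (if t < i then xs ! t else if t = i then x else xs ! (t - 1))"
proof (cases "t < i")
  case False
  then have "insert_nth i x xs ! t = (x # drop i xs) ! (t - i)"
    using assms(1) by (simp add: insert_nth_def nth_append)
  also have "\<dots> = (if t = i then x else xs ! (t - 1))"
    using False assms by (simp add: nth_Cons')
  finally show ?thesis using False by simp
qed (use assms in \<open>simp add: insert_nth_def nth_append\<close>)

lemma nth_insert_nth_eq_iff:
  assumes "i \<le> length xs" "t \<le> length xs" "x \<notin> set xs"
  shows "insert_nth i x xs ! t = x \<longleftrightarrow> t = i"
  using assms nth_mem[of "t - 1" xs] nth_mem[of t xs] by (auto simp: nth_insert_nth)

lemma distinct_insert_nth: "distinct xs \<Longrightarrow> x \<notin> set xs \<Longrightarrow> distinct (insert_nth i x xs)"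
  using set_take_disj_set_drop_if_distinct[of xs i i]
  by (auto simp: insert_nth_def dest: in_set_takeD in_set_dropD)

lemma insert_nth_inj:
  assumes "i \<le> length xs" "i' \<le> length xs'" "x \<notin> set xs" "x \<notin> set xs'"
    and eq: "insert_nth i x xs = insert_nth i' x xs'"
  shows "i = i' \<and> xs = xs'"
proof -
  have "length xs = length xs'"
    using arg_cong[OF eq, of length] by simp
  then have "i = i'"
    using eq assms nth_insert_nth_eq_iff by metis
  moreover have "xs = take i (insert_nth i x xs) @ drop (Suc i) (insert_nth i x xs)"
    "xs' = take i' (insert_nth i' x xs') @ drop (Suc i') (insert_nth i' x xs')"
    using assms(1,2) by (simp_all add: insert_nth_def)
  ultimately show ?thesis using eq by simp
qed

lemma is_perm_insert_nth_max:
  assumes "is_perm n p" "i \<le> n"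
  shows "is_perm (Suc n) (insert_nth i n p)"
  using assms distinct_insert_nth[of p n i] unfolding is_perm_def
  by (auto simp: set_insert_nth)

lemma image_insert_nth_below:
  "b < i \<Longrightarrow> i \<le> length p \<Longrightarrow> (!) (insert_nth i x p) ` {a..b} = (!) p ` {a..b}"
  by (intro image_cong) (auto simp: nth_insert_nth)

lemma image_insert_nth_above:
  assumes "i < a" "a \<le> b" "b \<le> length p"
  shows "(!) (insert_nth i x p) ` {a..b} = (!) p ` {a - 1..b - 1}"
proof -
  have shift: "{a..b} = Suc ` {a - 1..b - 1}"
    using assms(1,2) by (simp add: image_Suc_atLeastAtMost)
  have "(!) (insert_nth i x p) ` {a..b} = (\<lambda>t. insert_nth i x p ! Suc t) ` {a - 1..b - 1}"
    unfolding shift image_image ..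
  also have "\<dots> = (!) p ` {a - 1..b - 1}"
    using assms by (intro image_cong) (auto simp: nth_insert_nth)
  finally show ?thesis .
qed

lemma image_insert_nth_across:
  assumes "a \<le> i" "i \<le> b" "a < b" "b \<le> length p"
  shows "(!) (insert_nth i x p) ` {a..b} = insert x ((!) p ` {a..b - 1})"
proof -
  let ?q = "insert_nth i x p"
  have "{a..b} = {a..<i} \<union> {i} \<union> {Suc i..b}" "{a..b - 1} = {a..<i} \<union> {i..b - 1}"
    using assms by auto
  moreover have "(!) ?q ` {a..<i} = (!) p ` {a..<i}"
    using assms by (intro image_cong) (auto simp: nth_insert_nth)
  moreover have "(!) ?q ` {Suc i..b} = (!) p ` {i..b - 1}"
    using assms by (cases "i = b") (auto simp: image_insert_nth_above)
  ultimately show ?thesis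
    using assms by (auto simp: image_Un nth_insert_nth)
qed

lemma is_interval_insert_nth_max_across:
  assumes perm: "is_perm n p" and iv: "is_interval (insert_nth i n p) a b"
    and ab: "a \<le> i" "i \<le> b" "a < b"
  shows "is_interval p a (b - 1)" and "a = b - 1 \<Longrightarrow> p ! a = n - 1"
proof -
  let ?X = "(!) p ` {a..b - 1}"
  have len: "length p = n" using perm by (rule length_perm)
  then have "b \<le> n" and "consecutive_set ((!) (insert_nth i n p) ` {a..b})"
    using iv ab by (auto simp: is_interval_iff_image)
  then have cons: "consecutive_set (insert n ?X)"
    using ab len by (simp add: image_insert_nth_across)
  have less: "\<forall>v\<in>?X. v < n" using perm \<open>b \<le> n\<close> ab by (auto intro!: nth_perm_less)
  show "is_interval p a (b - 1)"
    using consecutive_set_remove_max[OF cons less] \<open>b \<le> n\<close> ab len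
    by (auto simp: is_interval_iff_image)
  show "p ! a = n - 1" if "a = b - 1"
  proof -
    have "p ! a < n" "n - 1 \<in> insert n {p ! a}"
      using that less consecutive_setD[OF cons, of "p ! a" n "n - 1"] by auto
    then show ?thesis by auto
  qed
qed

lemma simple_perm_insert_nth_max:
  assumes perm: "is_perm n p" and simple: "simple_perm p" and i: "0 < i" "i < n"
    and not_adjacent: "p ! (i - 1) \<noteq> n - 1" "p ! i \<noteq> n - 1"
  shows "simple_perm (insert_nth i n p)"
proof -
  let ?q = "insert_nth i n p"
  have len: "length p = n" "length ?q = Suc n"
    using perm i by (simp_all add: length_perm)
  have n3: "3 \<le> n" using simple len by (simp add: simple_perm_def)
  have trivial: "a = b \<or> a = 0 \<and> b = n - 1" if "is_interval p a b" for a b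
    using simple len that by (simp add: simple_perm_def)
  have "a = b \<or> a = 0 \<and> b = n" if iv: "is_interval ?q a b" for a b
  proof (rule ccontr)
    assume nontrivial: "\<not> (a = b \<or> a = 0 \<and> b = n)"
    have ab: "a < b" "b \<le> n" and cons: "consecutive_set ((!) ?q ` {a..b})"
      using iv nontrivial len by (auto simp: is_interval_iff_image)
    consider "b < i" | "i < a" | "a \<le> i" "i \<le> b" by linarith
    then show False
    proof cases
      case 1
      then have "is_interval p a b"
        using ab cons len i by (simp add: is_interval_iff_image image_insert_nth_below)
      then show False using trivial ab 1 i by fastforce
    next
      case 2
      then have "is_interval p (a - 1) (b - 1)"
        using ab cons len by (auto simp: is_interval_iff_image image_insert_nth_above)
      then show False using trivial ab 2 i by fastforce
    next
      case 3
      then consider "a = b - 1" | "a = 0" "b = n"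
        using trivial is_interval_insert_nth_max_across(1)[OF perm iv 3 ab(1)] ab by fastforce
      then show False
      proof cases
        case 1
        then have "p ! a = n - 1"
          using is_interval_insert_nth_max_across(2)[OF perm iv 3 ab(1)] by blast
        moreover have "i = a \<or> i - 1 = a" using 1 3 by linarith
        ultimately show False using not_adjacent by auto
      qed (use nontrivial in simp)
    qed
  qed
  then show ?thesis using n3 len by (simp add: simple_perm_def)
qed

definition insertion_positions :: "nat \<Rightarrow> nat list \<Rightarrow> nat set" where
  "insertion_positions n p = {i. 0 < i \<and> i < n \<and> p ! (i - 1) \<noteq> n - 1 \<and> p ! i \<noteq> n - 1}"

lemma finite_insertion_positions: "finite (insertion_positions n p)"
  unfolding insertion_positions_def by (rule finite_subset[of _ "{..<n}"]) auto

lemma card_insertion_positions: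
  assumes perm: "is_perm n p" and "0 < n"
  shows "n - 3 \<le> card (insertion_positions n p)"
proof -
  have distinct: "distinct p" and len: "length p = n" and "n - 1 \<in> set p"
    using assms length_perm unfolding is_perm_def by auto
  then obtain r where r: "r < n" "p ! r = n - 1" by (metis in_set_conv_nth)
  have "p ! t = n - 1 \<longleftrightarrow> t = r" if "t < n" for t
    using r that distinct len nth_eq_iff_index_eq by metis
  then have "{1..<n} - {r, Suc r} \<subseteq> insertion_positions n p"
    unfolding insertion_positions_def by auto
  then have "card ({1..<n} - {r, Suc r}) \<le> card (insertion_positions n p)"
    by (intro card_mono finite_insertion_positions)
  moreover have "n - 3 \<le> card ({1..<n} - {r, Suc r})"
    using diff_card_le_card_Diff[of "{r, Suc r}" "{1..<n}"] card_insert_le[of "{Suc r}" r] by simp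
  ultimately show ?thesis by linarith
qed

lemma num_simple_Suc_ge: "(n - 3) * num_simple n \<le> num_simple (Suc n)"
proof -
  let ?S = "{p. is_perm n p \<and> simple_perm p}"
  let ?T = "{p. is_perm (Suc n) p \<and> simple_perm p}"
  let ?D = "Sigma ?S (insertion_positions n)"
  let ?ins = "\<lambda>(p, i). insert_nth i n p"
  have "(n - 3) * num_simple n = (\<Sum>p\<in>?S. n - 3)" unfolding num_simple_def by simp
  also have "\<dots> \<le> (\<Sum>p\<in>?S. card (insertion_positions n p))"
    by (intro sum_mono card_insertion_positions) (auto simp: simple_perm_def length_perm)
  also have "\<dots> = card ?D"
    using finite_simple_perms finite_insertion_positions by simp
  also have "\<dots> \<le> card ?T"
  proof (rule card_inj_on_le)
    show "inj_on ?ins ?D"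
    proof (rule inj_onI)
      fix x y assume "x \<in> ?D" "y \<in> ?D" "?ins x = ?ins y"
      moreover obtain p i p' i' where "x = (p, i)" "y = (p', i')" by fastforce
      ultimately have "is_perm n p" "is_perm n p'" "i < n" "i' < n"
        and eq: "insert_nth i n p = insert_nth i' n p'"
        by (auto simp: insertion_positions_def)
      then show "x = y"
        using insert_nth_inj[OF _ _ _ _ eq] \<open>x = (p, i)\<close> \<open>y = (p', i')\<close>
        by (auto simp: length_perm is_perm_def)
    qed
    show "?ins ` ?D \<subseteq> ?T"
      by (auto simp: insertion_positions_def intro: is_perm_insert_nth_max simple_perm_insert_nth_max)
  qed (rule finite_simple_perms)
  finally show ?thesis unfolding num_simple_def .
qed

lemma fact_le_num_simple: "4 \<le> n \<Longrightarrow> fact (n - 4) \<le> num_simple n"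
proof (induction n rule: dec_induct)
  case base
  then show ?case using num_simple_4_pos by simp
next
  case (step n)
  have shift: "Suc n - 4 = Suc (n - 4)" "Suc (n - 4) = n - 3" using step(1) by auto
  have "fact (Suc n - 4) = Suc (n - 4) * fact (n - 4)" unfolding shift(1) by simp
  also have "\<dots> = (n - 3) * fact (n - 4)" unfolding shift(2) ..
  also have "\<dots> \<le> (n - 3) * num_simple n"
    using step(3) by (rule mult_le_mono2)
  also have "\<dots> \<le> num_simple (Suc n)" by (rule num_simple_Suc_ge)
  finally show ?case .
qed

definition simple_term :: "real \<Rightarrow> nat \<Rightarrow> real" where
  "simple_term y j = real j * real (num_simple j) * y ^ (j - 1)"

definition simple_gf_deriv :: "nat \<Rightarrow> real \<Rightarrow> real" where
  "simple_gf_deriv k y = (\<Sum>j=4..k. simple_term y j)"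

definition dLambda :: "nat \<Rightarrow> real \<Rightarrow> real" where
  "dLambda k y = (1 + y)^2 * (1 + simple_gf_deriv k y) - 1"

lemma simple_term_nonneg: "0 \<le> y \<Longrightarrow> 0 \<le> simple_term y j"
  unfolding simple_term_def by simp

lemma simple_gf_deriv_nonneg: "0 \<le> y \<Longrightarrow> 0 \<le> simple_gf_deriv k y"
  unfolding simple_gf_deriv_def by (intro sum_nonneg simple_term_nonneg)

lemma simple_gf_deriv_mono: "0 \<le> y \<Longrightarrow> y \<le> y' \<Longrightarrow> simple_gf_deriv k y \<le> simple_gf_deriv k y'"
  unfolding simple_gf_deriv_def simple_term_def
  by (intro sum_mono mult_left_mono power_mono) auto

lemma dLambda_strict_mono:
  assumes "0 \<le> y" "y < y'"
  shows "dLambda k y < dLambda k y'"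
proof -
  have "(1 + y)^2 * (1 + simple_gf_deriv k y) < (1 + y')^2 * (1 + simple_gf_deriv k y)"
    using assms simple_gf_deriv_nonneg[of y k] by (intro mult_strict_right_mono power_strict_mono) auto
  also have "\<dots> \<le> (1 + y')^2 * (1 + simple_gf_deriv k y')"
    using assms simple_gf_deriv_mono[of y y' k] by (intro mult_left_mono) auto
  finally show ?thesis unfolding dLambda_def by simp
qed

lemma Lambda_has_real_derivative:
  assumes "x < 1"
  shows "(Lambda k has_real_derivative dLambda k (x / (1 - x))) (at x)"
proof -
  have nz: "1 - x \<noteq> 0" using assms by simp
  have d_y: "((\<lambda>x. x / (1 - x)) has_real_derivative (1 / (1 - x))^2) (at x)"
    using nz by (auto intro!: derivative_eq_intros simp: field_simps power2_eq_square)
  have d_head: "((\<lambda>x. x^2 / (1 - x)) has_real_derivative (1 / (1 - x))^2 - 1) (at x)"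
    using nz by (auto intro!: derivative_eq_intros simp: divide_simps) (simp add: algebra_simps power2_eq_square)
  have d_term: "((\<lambda>x. real (num_simple j) * (x / (1 - x))^j) has_real_derivative
      simple_term (x / (1 - x)) j * (1 / (1 - x))^2) (at x)" for j
    unfolding simple_term_def
    by (rule DERIV_cong[OF DERIV_cmult[OF DERIV_power[OF d_y]]]) simp
  have "(Lambda k has_real_derivative
      (1 / (1 - x))^2 - 1 + (\<Sum>j=4..k. simple_term (x / (1 - x)) j * (1 / (1 - x))^2)) (at x)"
    unfolding Lambda_def[abs_def] by (intro DERIV_add d_head DERIV_sum d_term)
  moreover have "1 + x / (1 - x) = 1 / (1 - x)" using nz by (simp add: field_simps)
  ultimately show ?thesis
    unfolding dLambda_def simple_gf_deriv_def by (simp add: algebra_simps sum_distrib_left)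
qed

lemma tau_tilde_root: "0 < tau_tilde k \<and> dLambda k (tau_tilde k) = 1"
proof -
  have zero: "dLambda k 0 = 0"
    unfolding dLambda_def simple_gf_deriv_def simple_term_def by (simp add: power_0_left)
  moreover have "1 \<le> dLambda k 1"
    unfolding dLambda_def using simple_gf_deriv_nonneg[of 1 k] by simp
  moreover have "continuous_on {0..1} (dLambda k)"
    unfolding dLambda_def simple_gf_deriv_def simple_term_def by (intro continuous_intros)
  ultimately obtain y where "0 \<le> y" "dLambda k y = 1"
    using IVT'[of "dLambda k" 0 1 1] by auto
  moreover have "y \<noteq> 0" using zero \<open>dLambda k y = 1\<close> by auto
  ultimately have y: "0 < y" "dLambda k y = 1" by auto
  have unique: "y' = y" if "0 \<le> y'" "dLambda k y' = 1" for y'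
    using dLambda_strict_mono[of y' y k] dLambda_strict_mono[of y y' k] that y
    by (cases y' y rule: linorder_cases) auto
  have inverse: "y / (1 + y) / (1 - y / (1 + y)) = y" using y by (simp add: field_simps)
  have "tau k = y / (1 + y)" unfolding tau_def
  proof (rule the_equality)
    show "0 < y / (1 + y) \<and> y / (1 + y) < 1 \<and> deriv (Lambda k) (y / (1 + y)) = 1"
      using y inverse DERIV_imp_deriv[OF Lambda_has_real_derivative] by simp
  next
    fix x assume x: "0 < x \<and> x < 1 \<and> deriv (Lambda k) x = 1"
    then have "x / (1 - x) = y"
      using DERIV_imp_deriv[OF Lambda_has_real_derivative] by (intro unique) auto
    then show "x = y / (1 + y)" using x y by (auto simp: field_simps)
  qed
  then show ?thesis using y inverse unfolding tau_tilde_def by simp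
qed

lemma simple_gf_deriv_tau_tilde_le_one: "simple_gf_deriv k (tau_tilde k) \<le> 1"
proof -
  let ?y = "tau_tilde k"
  have "1 \<le> (1 + ?y)^2" "0 \<le> 1 + simple_gf_deriv k ?y"
    using tau_tilde_root[of k] simple_gf_deriv_nonneg[of ?y k] by auto
  then have "1 + simple_gf_deriv k ?y \<le> (1 + ?y)^2 * (1 + simple_gf_deriv k ?y)"
    using mult_right_mono by fastforce
  then show ?thesis using tau_tilde_root[of k] unfolding dLambda_def by simp
qed

lemma simple_term_tau_tilde_le_one:
  assumes "j \<in> {4..k}"
  shows "simple_term (tau_tilde k) j \<le> 1"
proof -
  have "simple_term (tau_tilde k) j \<le> simple_gf_deriv k (tau_tilde k)"
    unfolding simple_gf_deriv_def using assms tau_tilde_root[of k]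
    by (intro member_le_sum simple_term_nonneg) auto
  then show ?thesis using simple_gf_deriv_tau_tilde_le_one[of k] by simp
qed

lemma simple_term_Suc_ge:
  assumes "3 \<le> j" "0 \<le> y"
  shows "(real j - 3) * y * simple_term y j \<le> simple_term y (Suc j)"
proof -
  have "(real j - 3) * real (num_simple j) \<le> real (num_simple (Suc j))"
    using num_simple_Suc_ge[of j] assms(1) by (metis of_nat_diff of_nat_le_iff of_nat_mult of_nat_numeral)
  moreover have "y ^ (j - 1) * y = y ^ j" using assms(1) by (simp flip: power_Suc2)
  ultimately have "real j * ((real j - 3) * real (num_simple j)) * (y ^ (j - 1) * y)
      \<le> real (Suc j) * real (num_simple (Suc j)) * y ^ j"
    using assms by (intro mult_mono) auto
  then show ?thesis unfolding simple_term_def by (simp add: algebra_simps)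
qed

lemma exp_one_bounds: "27/10 \<le> exp (1::real)" "exp (1::real) \<le> 68/25"
  using e_approx_32 unfolding abs_le_iff by simp_all

lemma one_plus_pow_le_exp: "0 \<le> 1 + t \<Longrightarrow> (1 + t) ^ n \<le> exp (real n * t)"
  by (metis exp_ge_add_one_self exp_of_nat_mult power_mono)

lemma pow_le_exp_fact: "1 \<le> n \<Longrightarrow> real n ^ n \<le> exp 1 ^ (n - 1) * fact n"
proof (induction n rule: dec_induct)
  case (step n)
  have "real (Suc n) ^ Suc n = (real n + 1) * ((1 + 1 / real n) ^ n * real n ^ n)"
    using step(1) by (simp add: field_simps flip: power_mult_distrib)
  also have "\<dots> \<le> (real n + 1) * (exp 1 * (exp 1 ^ (n - 1) * fact n))"
    using step one_plus_pow_le_exp[of "1 / real n" n]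
    by (intro mult_left_mono mult_mono) auto
  also have "\<dots> = exp 1 ^ (Suc n - 1) * fact (Suc n)"
    using step(1) by (cases n) (auto simp: algebra_simps)
  finally show ?case .
qed simp

lemma exp_fact_le_pow: "1 \<le> n \<Longrightarrow> exp 1 ^ (n - 1) * fact n \<le> real n ^ Suc n"
proof (induction n rule: dec_induct)
  case (step n)
  have e: "exp 1 \<le> (1 + 1 / real n) ^ Suc n"
  proof -
    have "(1 - 1 / (real n + 1)) ^ Suc n \<le> exp (- 1)"
      using one_plus_pow_le_exp[of "- 1 / (real n + 1)" "Suc n"] by (simp add: field_simps)
    moreover have "1 - 1 / (real n + 1) = inverse (1 + 1 / real n)"
      using step(1) by (simp add: field_simps)
    ultimately have "inverse ((1 + 1 / real n) ^ Suc n) \<le> inverse (exp 1)"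
      by (simp add: power_inverse exp_minus)
    moreover have "0 < (1 + 1 / real n) ^ Suc n"
      by (intro zero_less_power add_pos_nonneg) auto
    ultimately show ?thesis using inverse_le_iff_le[of "(1 + 1 / real n) ^ Suc n" "exp 1"]
      by (simp del: power_Suc)
  qed
  have "exp 1 ^ (Suc n - 1) * fact (Suc n) = (real n + 1) * (exp 1 * (exp 1 ^ (n - 1) * fact n))"
    using step(1) by (cases n) (auto simp: algebra_simps)
  also have "\<dots> \<le> (real n + 1) * ((1 + 1 / real n) ^ Suc n * real n ^ Suc n)"
    using step e by (intro mult_left_mono mult_mono) auto
  also have "\<dots> = real (Suc n) ^ Suc (Suc n)"
    using step(1) by (simp add: field_simps flip: power_mult_distrib)
  finally show ?case .
qed simp

lemma fact_le_pow_mult_fact_diff: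
  assumes "r \<le> k"
  shows "fact k \<le> real k ^ r * fact (k - r)"
proof -
  have "fact k = fact k div fact (k - r) * (fact (k - r) :: nat)"
    by (simp add: fact_dvd)
  also have "\<dots> \<le> k ^ r * fact (k - r)"
    using fact_div_fact_le_pow[OF assms] by (rule mult_le_mono1)
  finally have "fact k \<le> k ^ r * (fact (k - r) :: nat)" .
  then have "real (fact k) \<le> real (k ^ r * fact (k - r))" by (rule of_nat_mono)
  then show ?thesis by simp
qed

lemma eventually_one_less_fact_growth:
  "eventually (\<lambda>k. 1 < real k * fact (k - 4) * (3 / real k) ^ (k - 1)) at_top"
proof -
  have "eventually (\<lambda>k::nat. 4 \<le> k \<and> real k ^ 2 < (11/10) ^ (k - 1)) at_top"
    by (intro eventually_conj eventually_ge_at_top) real_asymp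
  then show ?thesis
  proof eventually_elim
    case (elim k)
    define m where "m = k - 4"
    then have m: "k - 4 = m" "k - 1 = m + 3" "k = m + 4" using elim by auto
    define K where "K = real k"
    define e where "e = exp (1::real)"
    have K: "0 < K" and e: "0 < e" unfolding K_def e_def using elim by simp_all
    have "K ^ 4 * K ^ m = K ^ k" by (simp add: m(3) power_add)
    also have "\<dots> \<le> e ^ (m + 3) * fact k"
      using pow_le_exp_fact[of k] elim unfolding K_def e_def m(2) by simp
    also have "\<dots> \<le> e ^ (m + 3) * (K ^ 4 * fact m)"
      using fact_le_pow_mult_fact_diff[of 4 k] elim e unfolding K_def m(1) by simp
    finally have key: "K ^ m \<le> e ^ (m + 3) * fact m"
      using K by (simp add: mult.left_commute[of "K ^ 4"])
    have "(11/10) ^ (m + 3) \<le> (3 / e) ^ (m + 3)"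
      using exp_one_bounds unfolding e_def by (intro power_mono) (auto simp: field_simps)
    then have "K ^ 2 < (3 / e) ^ (m + 3)" using elim unfolding K_def m(2) by linarith
    then have "1 < (3 / e) ^ (m + 3) / K ^ 2" using K by simp
    also have "\<dots> = 3 ^ (m + 3) / K ^ 3 * (K / e ^ (m + 3))"
      using K by (simp add: power_divide field_simps power2_eq_square power3_eq_cube)
    also have "\<dots> \<le> 3 ^ (m + 3) / K ^ 3 * (K * fact m / K ^ m)"
      using key K e by (intro mult_left_mono) (auto simp: field_simps)
    also have "\<dots> = K * fact m * (3 / K) ^ (m + 3)"
      using K by (simp add: power_divide power_add field_simps power3_eq_cube)
    finally show ?case unfolding K_def m(1,2) .
  qed
qed

definition weight :: "nat \<Rightarrow> real" where
  "weight j = real j ^ 6 * (19/20) ^ (j - 4)"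

lemma summable_weight: "summable weight"
proof (rule summable_comparison_test_bigo)
  show "summable (\<lambda>n. norm (inverse (real n ^ 2)))"
    using inverse_power_summable[of 2] by simp
  show "weight \<in> O(\<lambda>n. inverse (real n ^ 2))"
    unfolding weight_def by real_asymp
qed

lemma sum_weight_le_suminf: "finite S \<Longrightarrow> sum weight S \<le> suminf weight"
  using summable_weight by (rule sum_le_suminf) (auto simp: weight_def)

text \<open>By \<open>exp_fact_le_pow\<close> the term is at most \<open>j\<^sup>3 r\<^sup>j\<^sup>-\<^sup>1\<close> with
  \<open>r = c j / (e k) \<le> 19/20\<close>; the factor \<open>r\<^sup>3\<close> carries the decay \<open>k\<^sup>-\<^sup>3\<close>.\<close>

lemma simple_term_le_weight:
  assumes y: "0 < y" "y \<le> c / real k" and j: "4 \<le> j"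
    and cj: "c * real j \<le> 19/20 * exp 1 * real k"
  shows "simple_term y j \<le> (c / exp 1)^3 * weight j / real k ^ 3"
proof -
  define e where "e = exp (1::real)"
  define r where "r = c * real j / (e * real k)"
  have e: "0 < e" unfolding e_def by simp
  have "0 < c / real k" using y by linarith
  then have c: "0 < c" and k: "0 < real k" by (auto simp: zero_less_divide_iff)
  have ek: "0 < e * real k" using e k by simp
  have "r \<le> 19/20 * e * real k / (e * real k)"
    unfolding r_def e_def by (rule divide_right_mono[OF cj]) (use ek in \<open>simp add: e_def\<close>)
  also have "\<dots> = 19/20" using e k by (simp add: mult.assoc)
  finally have r: "r \<le> 19/20" .
  have "0 \<le> r" unfolding r_def using c ek by simp
  have "simple_term y j \<le> real j * fact j * (c / real k) ^ (j - 1)"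
    unfolding simple_term_def using y num_simple_le_fact[of j]
    by (intro mult_mono power_mono) auto
  also have "\<dots> \<le> real j * (real j ^ Suc j / e ^ (j - 1)) * (c / real k) ^ (j - 1)"
    using exp_fact_le_pow[of j] j c k e
    by (intro mult_right_mono mult_left_mono) (auto simp: field_simps e_def)
  also have "\<dots> = real j ^ 3 * r ^ (j - 1)"
  proof -
    have "real j ^ Suc j = real j ^ 2 * real j ^ (j - 1)"
      using j by (simp flip: power_add)
    then show ?thesis
      unfolding r_def by (auto simp: power_divide power_mult_distrib field_simps power3_eq_cube power2_eq_square)
  qed
  also have "\<dots> \<le> real j ^ 3 * (r ^ 3 * (19/20) ^ (j - 4))"
  proof -
    have "r ^ (j - 1) = r ^ 3 * r ^ (j - 4)" using j by (simp flip: power_add)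
    then show ?thesis using r \<open>0 \<le> r\<close> by (simp add: mult_left_mono power_mono)
  qed
  also have "\<dots> = (c / e)^3 * weight j / real k ^ 3"
    unfolding r_def weight_def using k e by (simp add: power_divide power_mult_distrib field_simps)
  finally show ?thesis unfolding e_def .
qed

text \<open>The single term \<open>j = k\<close> of \<open>simple_gf_deriv\<close> is at most 1, while \<open>s\<^sub>k \<ge> (k - 4)!\<close>.\<close>

lemma eventually_tau_tilde_le: "eventually (\<lambda>k. tau_tilde k \<le> 3 / real k) at_top"
  using eventually_one_less_fact_growth eventually_ge_at_top[of 4]
proof eventually_elim
  case (elim k)
  show ?case
  proof (rule ccontr)
    assume "\<not> tau_tilde k \<le> 3 / real k"
    then have "(3 / real k) ^ (k - 1) < tau_tilde k ^ (k - 1)"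
      using elim by (intro power_strict_mono) auto
    moreover have "fact (k - 4) \<le> real (num_simple k)"
      using of_nat_mono[OF fact_le_num_simple[of k]] elim by simp
    ultimately have "real k * fact (k - 4) * (3 / real k) ^ (k - 1) < simple_term (tau_tilde k) k"
      unfolding simple_term_def using elim by (intro mult_le_less_imp_less mult_left_mono) auto
    then show False using elim simple_term_tau_tilde_le_one[of k k] by simp
  qed
qed

lemma eventually_tau_tilde_ge: "eventually (\<lambda>k. 3 / (2 * real k) \<le> tau_tilde k) at_top"
proof -
  define W where "W = suminf weight"
  have "eventually (\<lambda>k. 0 < k \<and> (1 + 3 / (2 * real k))^2 * (1 + W / real k ^ 3) < 2) at_top"
    by (intro eventually_conj eventually_gt_at_top) real_asymp
  then show ?thesis
  proof eventually_elim
    case (elim k)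
    let ?y = "tau_tilde k"
    show ?case
    proof (rule ccontr)
      assume "\<not> 3 / (2 * real k) \<le> ?y"
      then have y: "0 < ?y" "?y \<le> (3/2) / real k" using tau_tilde_root[of k] by auto
      have "simple_term ?y j \<le> weight j / real k ^ 3" if "j \<in> {4..k}" for j
      proof -
        have "3/2 * real j \<le> 19/20 * exp 1 * real k"
          using that exp_one_bounds by (intro mult_mono) auto
        then have "simple_term ?y j \<le> (3/2 / exp 1)^3 * weight j / real k ^ 3"
          using simple_term_le_weight[OF y] that by auto
        also have "\<dots> \<le> weight j / real k ^ 3"
        proof -
          have "(3/2 / exp 1)^3 \<le> (1::real)"
            using exp_one_bounds by (intro power_le_one) (auto simp: field_simps)
          then show ?thesis by (intro divide_right_mono mult_left_le_one_le) (auto simp: weight_def)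
        qed
        finally show ?thesis .
      qed
      then have "simple_gf_deriv k ?y \<le> sum weight {4..k} / real k ^ 3"
        unfolding simple_gf_deriv_def sum_divide_distrib by (intro sum_mono) auto
      also have "\<dots> \<le> W / real k ^ 3"
        unfolding W_def by (intro divide_right_mono sum_weight_le_suminf) auto
      finally have "(1 + ?y)^2 * (1 + simple_gf_deriv k ?y) \<le> (1 + 3 / (2 * real k))^2 * (1 + W / real k ^ 3)"
        using y simple_gf_deriv_nonneg[of ?y k] by (intro mult_mono power_mono) auto
      then show False using elim tau_tilde_root[of k] unfolding dLambda_def by simp
    qed
  qed
qed

lemma geometric_decay_downward:
  fixes u :: "nat \<Rightarrow> real"
  assumes step: "\<And>n. m \<le> n \<Longrightarrow> n < k \<Longrightarrow> u n \<le> q * u (Suc n)"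
    and "0 \<le> q" "m \<le> j" "j \<le> k"
  shows "u j \<le> q ^ (k - j) * u k"
  using assms(4)
proof (induction j rule: inc_induct)
  case (step n)
  have "u n \<le> q * u (Suc n)" using step.hyps assms(3) by (intro assms(1)) auto
  also have "\<dots> \<le> q * (q ^ (k - Suc n) * u k)" using step.IH assms(2) by (rule mult_left_mono)
  also have "\<dots> = q ^ (k - n) * u k"
    using step.hyps by (simp add: Suc_diff_Suc flip: power_Suc)
  finally show ?case .
qed simp

lemma eventually_low_terms_le:
  "eventually (\<lambda>k. \<forall>j. 4 \<le> j \<longrightarrow> 5 * j < 4 * k + 15 \<longrightarrow>
     simple_term (tau_tilde k) j \<le> 2 * weight j / real k ^ 3) at_top"
  using eventually_tau_tilde_le eventually_ge_at_top[of 60]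
proof eventually_elim
  case (elim k)
  show ?case
  proof (intro allI impI)
    fix j :: nat assume j: "4 \<le> j" "5 * j < 4 * k + 15"
    have y: "0 < tau_tilde k" "tau_tilde k \<le> 3 / real k" using elim tau_tilde_root[of k] by auto
    have "real (5 * j) < real (4 * k + 15)" using j(2) by (simp only: of_nat_less_iff)
    moreover have "19/20 * (27/10) * real k \<le> 19/20 * exp 1 * real k"
      using exp_one_bounds by (intro mult_right_mono) auto
    moreover have "60 \<le> real k" using elim by simp
    ultimately have "3 * real j \<le> 19/20 * exp 1 * real k" by linarith
    then have "simple_term (tau_tilde k) j \<le> (3 / exp 1)^3 * weight j / real k ^ 3"
      using simple_term_le_weight[OF y j(1)] by simp
    also have "\<dots> \<le> 2 * weight j / real k ^ 3"
    proof -
      have "(3 / exp 1)^3 \<le> (3 / (27/10) :: real)^3"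
        using exp_one_bounds by (intro power_mono divide_left_mono) auto
      then have "(3 / exp 1)^3 \<le> (2::real)" by (simp add: power3_eq_cube)
      then show ?thesis by (intro divide_right_mono mult_right_mono) (auto simp: weight_def)
    qed
    finally show "simple_term (tau_tilde k) j \<le> 2 * weight j / real k ^ 3" .
  qed
qed

lemma eventually_high_terms_le:
  "eventually (\<lambda>k. \<forall>j. 4 * k + 15 \<le> 5 * j \<longrightarrow> j \<le> k \<longrightarrow>
     simple_term (tau_tilde k) j \<le> (5/6) ^ (k - j)) at_top"
  using eventually_tau_tilde_ge eventually_ge_at_top[of 4]
proof eventually_elim
  case (elim k)
  let ?u = "simple_term (tau_tilde k)"
  have ratio: "?u n \<le> 5/6 * ?u (Suc n)" if "4 * k + 15 \<le> 5 * n" for n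
  proof -
    have "6/5 = (4 * real k / 5) * (3 / (2 * real k))" using elim by simp
    also have "\<dots> \<le> (real n - 3) * tau_tilde k"
      using that elim by (intro mult_mono) auto
    finally have "6/5 * ?u n \<le> (real n - 3) * tau_tilde k * ?u n"
      using tau_tilde_root[of k] by (intro mult_right_mono simple_term_nonneg) auto
    also have "\<dots> \<le> ?u (Suc n)"
      using that tau_tilde_root[of k] by (intro simple_term_Suc_ge) auto
    finally show ?thesis by simp
  qed
  show ?case
  proof (intro allI impI)
    fix j assume j: "4 * k + 15 \<le> 5 * j" "j \<le> k"
    have "?u j \<le> (5/6) ^ (k - j) * ?u k"
      using ratio j by (intro geometric_decay_downward[of "(4 * k + 15 + 4) div 5"]) auto
    also have "\<dots> \<le> (5/6) ^ (k - j)"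
      using simple_term_tau_tilde_le_one[of k k] elim by (intro mult_left_le) auto
    finally show "?u j \<le> (5/6) ^ (k - j)" .
  qed
qed

lemma A_nonneg: "0 \<le> A k"
  unfolding A_def using tau_tilde_root[of k] by (intro sum_nonneg) simp

lemma root3_le_iota_Suc: "root 3 (real k) \<le> real (Suc (iota k))"
  unfolding iota_def by linarith

lemma eventually_A_le: "eventually (\<lambda>k. A k \<le> (2 * suminf weight + 1) / real k ^ 3) at_top"
proof -
  have "eventually (\<lambda>k::nat. real k * (5/6) powr root 3 (real k) \<le> 1 / real k ^ 3) at_top"
    by real_asymp
  with eventually_low_terms_le eventually_high_terms_le show ?thesis
  proof eventually_elim
    case (elim k)
    let ?t = "simple_term (tau_tilde k)"
    define S where "S = {4..k - iota k - 1}"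
    define L where "L = {j. 5 * j < 4 * k + 15}"
    have "A k = sum ?t (S \<inter> L) + sum ?t (S - L)"
      unfolding A_def S_def simple_term_def by (rule sum.Int_Diff) simp
    also have "sum ?t (S \<inter> L) \<le> 2 * suminf weight / real k ^ 3"
    proof -
      have "sum ?t (S \<inter> L) \<le> (\<Sum>j\<in>S \<inter> L. 2 * weight j / real k ^ 3)"
        using elim by (intro sum_mono) (auto simp: S_def L_def)
      also have "\<dots> \<le> 2 * suminf weight / real k ^ 3"
        unfolding sum_divide_distrib[symmetric] sum_distrib_left[symmetric] using S_def
        by (intro divide_right_mono mult_left_mono sum_weight_le_suminf) auto
      finally show ?thesis .
    qed
    also have "sum ?t (S - L) \<le> 1 / real k ^ 3"
    proof -
      have "?t j \<le> (5/6) powr root 3 (real k)" if "j \<in> S - L" for j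
      proof -
        have "?t j \<le> (5/6) ^ (k - j)" using elim that by (auto simp: S_def L_def)
        also have "\<dots> = (5/6) powr real (k - j)" by (simp add: powr_realpow)
        also have "\<dots> \<le> (5/6) powr root 3 (real k)"
          using that root3_le_iota_Suc[of k] by (intro powr_mono') (auto simp: S_def)
        finally show ?thesis .
      qed
      then have "sum ?t (S - L) \<le> real (card (S - L)) * (5/6) powr root 3 (real k)"
        by (rule sum_bounded_above)
      also have "\<dots> \<le> real k * (5/6) powr root 3 (real k)"
        using card_mono[of S "S - L"] by (intro mult_right_mono) (auto simp: S_def)
      finally show ?thesis using elim by linarith
    qed
    finally show ?case by (simp add: add_divide_distrib)
  qed
qed

theorem lemma5p3:
  shows "A \<in> O[at_top](\<lambda>k. real k powr (-3))"
proof (rule bigoI)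
  show "eventually (\<lambda>k. norm (A k) \<le> (2 * suminf weight + 1) * norm (real k powr (-3))) at_top"
    using eventually_A_le eventually_gt_at_top[of 0]
    by eventually_elim (simp add: A_nonneg powr_minus_divide)
qed

end
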